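(* Let $l\ge1$ and work in $\mathfrak{OA}_{1,2l}=\mathfrak{OA}/\mathfrak I_{(t-1)^{2l}}$, writing $X_k,Y_k$ for the images. Set $H_0=\tfrac12X_0$, $E_0=\tfrac14Y_1+\tfrac18\big(X_1-\sum_{k=1}^{2l-1}(-1)^kX_k\big)$, $F_0=\tfrac14Y_1-\tfrac18\big(X_1-\sum_{k=1}^{2l-1}(-1)^kX_k\big)$, $H_1=[E_0,F_0]$, and inductively $E_{j+1}=\tfrac12[H_1,E_j]$, $F_{j+1}=-\tfrac12[H_1,F_j]$ for $0\le j\le l-2$. Then: (i) $[E_{j+1},F_{k-1}]=[E_j,F_k]$ whenever $0\le j\le l-2$ and $1\le k\le l-1$; hence $H_m:=[E_j,F_k]$ with $j+k+1=m$ ($0\le j,k\le l-1$) is well defined for $1\le m\le 2l-1$, and agrees with $H_1$ for $m=1$. (ii) $\{E_j,F_j,H_j:0\le j\le l-1\}$ is a basis of $\mathfrak{OA}_{1,2l}$, and $H_m=0$ for $l\le m\le 2l-1$. (iii) For $0\le j,k\le l-1$: $[E_j,F_k]=H_{j+k+1}$, $[H_j,E_k]=2E_{j+k}$, $[H_j,F_k]=-2F_{j+k}$, $[E_j,E_k]=0$, $[F_j,F_k]=0$, where any $E_m,F_m,H_m$ with $m\ge l$ is interpreted as $0$.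
   Context: Work over $\mathbb C$. $\mathfrak{sl}_2$ has basis $e,f,h$ with $[e,f]=h$, $[h,e]=2e$, $[h,f]=-2f$. The Onsager algebra is the Lie subalgebra $\mathfrak{OA}=\{p(t)e+p(t^{-1})f+q(t)h:\ p,q\in\mathbb C[t,t^{-1}],\ q(t^{-1})=-q(t)\}$ of the loop algebra $\mathbb C[t,t^{-1}]\otimes\mathfrak{sl}_2$ (bracket $[px,qy]=pq[x,y]$). $\mathfrak I_{(t-1)^L}=\{p(t)e+p(t^{-1})f+q(t)h\in\mathfrak{OA}: p,q\in(t-1)^L\mathbb C[t,t^{-1}]\}$. For $k\ge0$, $X_k=2(t-1)^ke+2(t^{-1}-1)^kf$ and $Y_k=(-1)^k\big((t-1)^k-(t^{-1}-1)^k\big)h$, elements of $\mathfrak{OA}$. *)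

theory Defs
  imports Complex_Main "HOL-Library.Poly_Mapping" "HOL-Library.Product_Plus"
begin

text \<open>Laurent polynomials C[t,t^-1] as finitely supported functions int to complex
  (convolution product).\<close>
type_synonym lpoly = "int \<Rightarrow>\<^sub>0 complex"

definition lt :: lpoly where "lt = Poly_Mapping.single 1 1"
definition ltinv :: lpoly where "ltinv = Poly_Mapping.single (-1) 1"
definition lconst :: "complex \<Rightarrow> lpoly" where "lconst c = Poly_Mapping.single 0 c"

definition linv :: "lpoly \<Rightarrow> lpoly" where "linv p = Poly_Mapping.map_key uminus p"

text \<open>Elements of the loop algebra C[t,t^-1] (x) sl2: a triple (a,b,c) stands for
  a e + b f + c h.\<close>
type_synonym loop = "lpoly \<times> lpoly \<times> lpoly"

definition lsmul :: "complex \<Rightarrow> loop \<Rightarrow> loop" where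
  "lsmul z x = (case x of (a,b,c) \<Rightarrow> (lconst z * a, lconst z * b, lconst z * c))"

text \<open>Bracket from [e,f]=h, [h,e]=2e, [h,f]=-2f extended C[t,t^-1]-bilinearly.\<close>
definition lbr :: "loop \<Rightarrow> loop \<Rightarrow> loop" where
  "lbr x y = (case x of (a,b,c) \<Rightarrow> case y of (a',b',c') \<Rightarrow>
     (2 * (c * a' - a * c'), 2 * (b * c' - c * b'), a * b' - b * a'))"

definition OA :: "loop set" where
  "OA = {(p, p', q). p' = linv p \<and> linv q = - q}"

definition Iid :: "nat \<Rightarrow> loop set" where
  "Iid L = {(p, p', q) \<in> OA. (lt - 1) ^ L dvd p \<and> (lt - 1) ^ L dvd q}"

definition Xe :: "nat \<Rightarrow> loop" where
  "Xe k = (2 * (lt - 1) ^ k, 2 * (ltinv - 1) ^ k, 0)"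

definition Ye :: "nat \<Rightarrow> loop" where
  "Ye k = (0, 0, (-1) ^ k * ((lt - 1) ^ k - (ltinv - 1) ^ k))"

text \<open>Representatives in OA of the elements of OA/I_{(t-1)^{2l}}.\<close>
definition H0 :: loop where "H0 = lsmul (1/2) (Xe 0)"

definition Xsum :: "nat \<Rightarrow> loop" where
  "Xsum l = Xe 1 - (\<Sum>k\<in>{1..2*l-1}. lsmul ((-1) ^ k) (Xe k))"

definition E0 :: "nat \<Rightarrow> loop" where
  "E0 l = lsmul (1/4) (Ye 1) + lsmul (1/8) (Xsum l)"
definition F0 :: "nat \<Rightarrow> loop" where
  "F0 l = lsmul (1/4) (Ye 1) - lsmul (1/8) (Xsum l)"

definition H1 :: "nat \<Rightarrow> loop" where "H1 l = lbr (E0 l) (F0 l)"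

fun Eg :: "nat \<Rightarrow> nat \<Rightarrow> loop" where
  "Eg l 0 = E0 l"
| "Eg l (Suc j) = lsmul (1/2) (lbr (H1 l) (Eg l j))"

fun Fg :: "nat \<Rightarrow> nat \<Rightarrow> loop" where
  "Fg l 0 = F0 l"
| "Fg l (Suc j) = lsmul (-1/2) (lbr (H1 l) (Fg l j))"

text \<open>H_0 = X_0/2; for m >= 1, H_m = [E_j,F_k] with the canonical choice
  j = min (m-1) (l-1), k = m-1-j (well-definedness is part (i) of the theorem).\<close>
definition Hg :: "nat \<Rightarrow> nat \<Rightarrow> loop" where
  "Hg l m = (if m = 0 then H0 else
     (let j = min (m - 1) (l - 1) in lbr (Eg l j) (Fg l (m - 1 - j))))"

definition Et :: "nat \<Rightarrow> nat \<Rightarrow> loop" where "Et l m = (if m < l then Eg l m else 0)"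
definition Ft :: "nat \<Rightarrow> nat \<Rightarrow> loop" where "Ft l m = (if m < l then Fg l m else 0)"
definition Ht :: "nat \<Rightarrow> nat \<Rightarrow> loop" where "Ht l m = (if m < l then Hg l m else 0)"

definition qeq :: "nat \<Rightarrow> loop \<Rightarrow> loop \<Rightarrow> bool" where
  "qeq l x y \<longleftrightarrow> x - y \<in> Iid (2 * l)"

end

theory Submission
  imports Defs
begin

text \<open>Put \<open>W = t - t\<^sup>-\<^sup>1 = (t - 1)(1 + t\<^sup>-\<^sup>1)\<close>. Since \<open>1 + t\<^sup>-\<^sup>1\<close> does not vanish at \<open>t = 1\<close>,
  the powers \<open>1, W, \<dots>, W\<^sup>N\<^sup>-\<^sup>1\<close> form a basis of \<open>\<complex>[t, t\<^sup>-\<^sup>1]/(t - 1)\<^sup>N\<close>: evaluating at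
  \<open>t = 1\<close> determines one coefficient, and dividing by \<open>t - 1\<close> reduces \<open>N\<close>.
  Modulo \<open>(t - 1)\<^sup>2\<^sup>l\<close> the alternating sum in \<open>E\<^sub>0, F\<^sub>0\<close> collapses to \<open>2W\<close>, so
  \<open>E\<^sub>0 = W/4 (e - f - h)\<close> and \<open>F\<^sub>0 = -W/4 (e - f + h)\<close>, whence \<open>H\<^sub>1 = W\<^sup>2/4 (e + f)\<close> and by induction
  \<open>E\<^sub>j = W\<^sup>2\<^sup>j\<^sup>+\<^sup>1/4\<^sup>j\<^sup>+\<^sup>1 (e - f - h)\<close>, \<open>F\<^sub>j = -W\<^sup>2\<^sup>j\<^sup>+\<^sup>1/4\<^sup>j\<^sup>+\<^sup>1 (e - f + h)\<close>,
  \<open>H\<^sub>m = W\<^sup>2\<^sup>m/4\<^sup>m (e + f)\<close>. All bracket relations are then identities between these explicit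
  elements, and the ones of index at least \<open>l\<close> vanish because \<open>(t - 1)\<^sup>2\<^sup>l\<close> divides \<open>W\<^sup>2\<^sup>l\<close>.
  For (ii), an element \<open>p e + p(t\<^sup>-\<^sup>1) f + q h\<close> of OA has \<open>q(t\<^sup>-\<^sup>1) = -q\<close>, so \<open>q\<close> involves only odd
  powers of \<open>W\<close> while \<open>p\<close> involves all \<open>2l\<close> of them; these \<open>3l\<close> coordinates correspond
  bijectively to the coefficients of \<open>E\<^sub>j, F\<^sub>j, H\<^sub>j\<close>.\<close>

section \<open>Laurent polynomials\<close>

lemma lpoly_induct [case_names zero single add]:
  fixes p :: lpoly
  assumes "P 0" "\<And>k c. P (Poly_Mapping.single k c)" "\<And>a b. P a \<Longrightarrow> P b \<Longrightarrow> P (a + b)"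
  shows "P p"
proof -
  have "p = (\<Sum>k\<in>Poly_Mapping.keys p. Poly_Mapping.single k (Poly_Mapping.lookup p k))"
    by (rule poly_mapping_eqI) (auto simp: lookup_sum lookup_single when_def in_keys_iff)
  moreover have "P (\<Sum>k\<in>K. Poly_Mapping.single k (Poly_Mapping.lookup p k))" if "finite K" for K
    using that by (induction K rule: finite_induct) (auto intro: assms)
  ultimately show ?thesis by (metis finite_keys)
qed

lemma lpoly_mult_hom:
  fixes f :: "lpoly \<Rightarrow> 'a::comm_ring"
  assumes f_add: "\<And>a b. f (a + b) = f a + f b"
    and f_single: "\<And>k c k' c'. f (Poly_Mapping.single k c * Poly_Mapping.single k' c')
                   = f (Poly_Mapping.single k c) * f (Poly_Mapping.single k' c')"
  shows "f (a * b) = f a * f b"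
proof -
  have f_zero: "f 0 = 0" using f_add[of 0 0] by simp
  show ?thesis
  proof (induction a rule: lpoly_induct)
    case (single k c)
    show ?case
      by (induction b rule: lpoly_induct) (simp_all add: f_zero f_single f_add distrib_left)
  qed (simp_all add: f_zero f_add distrib_right)
qed

lemma linv_add [simp]: "linv (a + b) = linv a + linv b"
  unfolding linv_def by (simp add: map_key_plus inj_def)

lemma linv_single [simp]: "linv (Poly_Mapping.single k c) = Poly_Mapping.single (- k) c"
  unfolding linv_def by (metis map_key_single inj_def minus_minus neg_equal_iff_equal)

lemma linv_zero [simp]: "linv 0 = 0"
  by (metis linv_single single_zero)

lemma linv_uminus [simp]: "linv (- a) = - linv a"
  by (metis add.right_inverse add_eq_0_iff linv_add linv_zero)

lemma linv_diff [simp]: "linv (a - b) = linv a - linv b"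
  by (metis diff_conv_add_uminus linv_add linv_uminus)

lemma linv_mult [simp]: "linv (a * b) = linv a * linv b"
  by (rule lpoly_mult_hom) (simp_all add: mult_single)

lemma linv_one [simp]: "linv 1 = 1"
  by (metis linv_single single_one minus_zero)

lemma linv_numeral [simp]: "linv (numeral n) = numeral n"
  by (metis linv_single single_numeral minus_zero)

lemma linv_power [simp]: "linv (a ^ n) = linv a ^ n"
  by (induction n) simp_all

lemma linv_linv [simp]: "linv (linv p) = p"
  by (induction p rule: lpoly_induct) simp_all

lemma linv_sum: "linv (sum f A) = (\<Sum>x\<in>A. linv (f x))"
  by (induction A rule: infinite_finite_induct) simp_all

lemma linv_lconst [simp]: "linv (lconst c) = lconst c"
  unfolding lconst_def by simp

lemma linv_lt [simp]: "linv lt = ltinv" and linv_ltinv [simp]: "linv ltinv = lt"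
  unfolding lt_def ltinv_def by simp_all

lemma lt_ltinv [simp]: "lt * ltinv = 1"
  unfolding lt_def ltinv_def by (simp add: mult_single)

lemma lconst_add: "lconst (a + b) = lconst a + lconst b"
  unfolding lconst_def by (simp add: single_add)

lemma lconst_mult: "lconst (a * b) = lconst a * lconst b"
  unfolding lconst_def by (simp add: mult_single)

lemma lconst_uminus: "lconst (- a) = - lconst a"
  unfolding lconst_def by (simp add: single_uminus)

lemma lconst_diff: "lconst (a - b) = lconst a - lconst b"
  unfolding lconst_def by (simp add: single_diff)

lemma lconst_0 [simp]: "lconst 0 = 0" and lconst_1 [simp]: "lconst 1 = 1"
  and lconst_numeral [simp]: "lconst (numeral n) = numeral n"
  unfolding lconst_def by simp_all

lemma lconst_power: "lconst (a ^ n) = lconst a ^ n"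
  by (induction n) (simp_all add: lconst_mult)

lemma lconst_mult_numeral: "lconst a * numeral n = lconst (a * numeral n)"
  by (simp add: lconst_mult)

lemmas lconst_hom = lconst_add lconst_mult lconst_uminus lconst_diff lconst_power

definition eval1 :: "lpoly \<Rightarrow> complex" where
  "eval1 p = (\<Sum>k\<in>Poly_Mapping.keys p. Poly_Mapping.lookup p k)"

lemma eval1_add [simp]: "eval1 (a + b) = eval1 a + eval1 b"
  unfolding eval1_def by (rule setsum_keys_plus_distrib[where f = "\<lambda>k x. x"]) simp_all

lemma eval1_single [simp]: "eval1 (Poly_Mapping.single k c) = c"
  unfolding eval1_def by (cases "c = 0") simp_all

lemma eval1_zero [simp]: "eval1 0 = 0"
  by (metis eval1_single single_zero)

lemma eval1_uminus [simp]: "eval1 (- a) = - eval1 a"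
  by (metis add.right_inverse add_eq_0_iff eval1_add eval1_zero)

lemma eval1_diff [simp]: "eval1 (a - b) = eval1 a - eval1 b"
  by (metis diff_conv_add_uminus eval1_add eval1_uminus)

lemma eval1_mult [simp]: "eval1 (a * b) = eval1 a * eval1 b"
  by (rule lpoly_mult_hom) (simp_all add: mult_single)

lemma eval1_one [simp]: "eval1 1 = 1"
  by (metis eval1_single single_one)

lemma eval1_numeral [simp]: "eval1 (numeral n) = numeral n"
  by (metis eval1_single single_numeral)

lemma eval1_power [simp]: "eval1 (a ^ n) = eval1 a ^ n"
  by (induction n) simp_all

lemma eval1_lconst [simp]: "eval1 (lconst c) = c"
  unfolding lconst_def by simp

lemma eval1_lt [simp]: "eval1 lt = 1" and eval1_ltinv [simp]: "eval1 ltinv = 1"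
  unfolding lt_def ltinv_def by simp_all

lemma lt_minus_one_dvd_single: "lt - 1 dvd Poly_Mapping.single k 1 - 1"
proof -
  have lt_pow: "lt ^ n = Poly_Mapping.single (int n) 1" for n
    by (induction n) (simp_all add: lt_def mult_single add.commute)
  have ltinv_pow: "ltinv ^ n = Poly_Mapping.single (- int n) 1" for n
    by (induction n) (simp_all add: ltinv_def mult_single add.commute)
  have dvd_lt_pow: "lt - 1 dvd lt ^ n - 1" for n
    by (metis power_diff_1_eq dvd_triv_left)
  have "ltinv ^ n - 1 = - (ltinv ^ n * (lt ^ n - 1))" for n
    by (simp add: algebra_simps flip: power_mult_distrib)
  then have dvd_ltinv_pow: "lt - 1 dvd ltinv ^ n - 1" for n
    by (metis dvd_lt_pow dvd_minus_iff dvd_mult)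
  show ?thesis
  proof (cases "k \<ge> 0")
    case True
    then show ?thesis using dvd_lt_pow[of "nat k"] by (simp add: lt_pow)
  next
    case False
    then show ?thesis using dvd_ltinv_pow[of "nat (- k)"] by (simp add: ltinv_pow)
  qed
qed

lemma lt_minus_one_dvd_sub_eval1: "lt - 1 dvd p - lconst (eval1 p)"
proof (induction p rule: lpoly_induct)
  case (single k c)
  have "Poly_Mapping.single k c - lconst c = lconst c * (Poly_Mapping.single k 1 - 1)"
    unfolding lconst_def by (simp add: mult_single right_diff_distrib)
  then show ?case using lt_minus_one_dvd_single by simp
next
  case (add a b)
  then show ?case by (metis (no_types) dvd_add add_diff_add eval1_add lconst_add)
qed simp

lemma lt_minus_one_dvd_iff: "lt - 1 dvd p \<longleftrightarrow> eval1 p = 0"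
  using lt_minus_one_dvd_sub_eval1[of p] by (auto simp: dvd_diff_commute elim: dvdE)

section \<open>Powers of \<open>W\<close> as a basis modulo \<open>(t - 1)\<^sup>N\<close>\<close>

definition lcong :: "nat \<Rightarrow> lpoly \<Rightarrow> lpoly \<Rightarrow> bool" where
  "lcong N p q \<longleftrightarrow> (lt - 1) ^ N dvd p - q"

lemma lcong_refl [simp]: "lcong N p p"
  unfolding lcong_def by simp

lemma lcong_sym: "lcong N p q \<Longrightarrow> lcong N q p"
  unfolding lcong_def by (metis dvd_minus_iff minus_diff_eq)

lemma lcong_add: "lcong N p p' \<Longrightarrow> lcong N q q' \<Longrightarrow> lcong N (p + q) (p' + q')"
  unfolding lcong_def by (metis dvd_add add_diff_add)

lemma lcong_trans [trans]: "lcong N p q \<Longrightarrow> lcong N q r \<Longrightarrow> lcong N p r"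
  using lcong_add[of N p q "q - r" 0] by (simp add: lcong_def)

lemma lcong_uminus: "lcong N p p' \<Longrightarrow> lcong N (- p) (- p')"
  unfolding lcong_def by (metis dvd_minus_iff minus_diff_eq minus_diff_minus)

lemma lcong_diff: "lcong N p p' \<Longrightarrow> lcong N q q' \<Longrightarrow> lcong N (p - q) (p' - q')"
  using lcong_add[of N p p' "- q" "- q'"] lcong_uminus[of N q q'] by simp

lemma lcong_mult: "lcong N p p' \<Longrightarrow> lcong N q q' \<Longrightarrow> lcong N (p * q) (p' * q')"
proof -
  assume "lcong N p p'" "lcong N q q'"
  then have "(lt - 1) ^ N dvd (p - p') * q + p' * (q - q')"
    unfolding lcong_def by (intro dvd_add dvd_mult dvd_mult2)
  then show ?thesis
    unfolding lcong_def by (simp add: algebra_simps)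
qed

lemma lcong_linv: "lcong N p q \<Longrightarrow> lcong N (linv p) (linv q)"
proof -
  have "linv (lt - 1) = (lt - 1) * - ltinv"
    by (simp add: algebra_simps)
  then have "(lt - 1) ^ N dvd linv (lt - 1) ^ N"
    by (intro dvd_power_same) simp
  then have "(lt - 1) ^ N dvd linv ((lt - 1) ^ N * r)" for r
    by simp
  then show "lcong N p q \<Longrightarrow> lcong N (linv p) (linv q)"
    unfolding lcong_def by (metis dvdE linv_diff)
qed

lemma lcong_0_if_dvd: "(lt - 1) ^ N dvd p \<Longrightarrow> lcong N p 0"
  unfolding lcong_def by simp

lemma lt_minus_one_neq_0: "lt - 1 \<noteq> 0"
proof
  assume "lt - 1 = 0"
  then have "Poly_Mapping.lookup lt 1 = Poly_Mapping.lookup (1 :: lpoly) 1"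
    by simp
  then show False
    unfolding lt_def by (simp add: lookup_one)
qed

lemma powers_independent_mult:
  assumes "eval1 v \<noteq> 0" "eval1 u \<noteq> 0"
    and "(lt - 1) ^ n dvd u * (\<Sum>i<n. lconst (c i) * ((lt - 1) * v) ^ i)"
    and "i < n"
  shows "c i = 0"
  using assms(2-)
proof (induction n arbitrary: u c i)
  case (Suc n)
  define w where "w = (lt - 1) * v"
  define rest where "rest = (\<Sum>i<n. lconst (c (Suc i)) * w ^ i)"
  have "(\<Sum>i<n. lconst (c (Suc i)) * w ^ Suc i) = w * rest"
    unfolding rest_def sum_distrib_left by (simp add: mult_ac)
  then have "u * (\<Sum>i<Suc n. lconst (c i) * w ^ i) = u * lconst (c 0) + u * (w * rest)"
    by (subst sum.lessThan_Suc_shift) (simp add: distrib_left)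
  also have "\<dots> = u * lconst (c 0) + (lt - 1) * (u * v * rest)"
    by (simp add: w_def mult_ac)
  finally have split: "u * (\<Sum>i<Suc n. lconst (c i) * w ^ i) = u * lconst (c 0) + (lt - 1) * (u * v * rest)" .
  have "lt - 1 dvd u * (\<Sum>i<Suc n. lconst (c i) * w ^ i)"
    using Suc.prems(2) unfolding w_def by (rule dvd_trans[rotated]) simp
  then have c0: "c 0 = 0"
    using Suc.prems(1) unfolding lt_minus_one_dvd_iff split by simp
  have "(lt - 1) ^ Suc n dvd u * lconst (c 0) + (lt - 1) * (u * v * rest)"
    using Suc.prems(2) unfolding split[unfolded w_def] .
  then have "(lt - 1) * (lt - 1) ^ n dvd (lt - 1) * (u * v * rest)"
    by (simp add: c0)
  then have "(lt - 1) ^ n dvd u * v * rest"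
    using lt_minus_one_neq_0 by simp
  then have "c (Suc j) = 0" if "j < n" for j
    using Suc.IH[of "u * v" "c \<circ> Suc" j] Suc.prems(1) assms(1) that unfolding rest_def w_def by simp
  then show ?case
    using c0 Suc.prems(3) by (cases i) auto
qed simp

lemma powers_independent:
  assumes "eval1 v \<noteq> 0" "lcong n (\<Sum>i<n. lconst (c i) * ((lt - 1) * v) ^ i) 0" "i < n"
  shows "c i = 0"
  using powers_independent_mult[of v 1 n c i] assms unfolding lcong_def by simp

lemma powers_span:
  assumes "eval1 v \<noteq> 0"
  shows "\<exists>c. lcong n p (\<Sum>i<n. lconst (c i) * ((lt - 1) * v) ^ i)"
proof (induction n)
  case (Suc n)
  then obtain c r where r: "p - (\<Sum>i<n. lconst (c i) * ((lt - 1) * v) ^ i) = (lt - 1) ^ n * r"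
    unfolding lcong_def by (auto elim: dvdE)
  define c' where "c' = c(n := eval1 r / eval1 v ^ n)"
  have "(\<Sum>i<n. lconst (c' i) * ((lt - 1) * v) ^ i) = (\<Sum>i<n. lconst (c i) * ((lt - 1) * v) ^ i)"
    unfolding c'_def by (intro sum.cong) auto
  then have "p - (\<Sum>i<Suc n. lconst (c' i) * ((lt - 1) * v) ^ i)
      = (lt - 1) ^ n * r - lconst (c' n) * ((lt - 1) ^ n * v ^ n)"
    using r by (simp add: power_mult_distrib)
  also have "\<dots> = (lt - 1) ^ n * (r - lconst (c' n) * v ^ n)"
    by (simp add: algebra_simps)
  finally have eq: "p - (\<Sum>i<Suc n. lconst (c' i) * ((lt - 1) * v) ^ i) = (lt - 1) ^ n * (r - lconst (c' n) * v ^ n)" .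
  have "lt - 1 dvd r - lconst (c' n) * v ^ n"
    unfolding lt_minus_one_dvd_iff c'_def using assms by simp
  then have "(lt - 1) ^ n * (lt - 1) dvd (lt - 1) ^ n * (r - lconst (c' n) * v ^ n)"
    by (rule mult_dvd_mono[OF dvd_refl])
  then have "lcong (Suc n) p (\<Sum>i<Suc n. lconst (c' i) * ((lt - 1) * v) ^ i)"
    unfolding lcong_def eq power_Suc2 .
  then show ?case by blast
qed (simp add: lcong_def)

definition W :: lpoly where
  "W = lt - ltinv"

lemma W_eq: "W = (lt - 1) * (1 + ltinv)"
  unfolding W_def by (simp add: algebra_simps)

lemma linv_W [simp]: "linv W = - W"
  unfolding W_def by simp

lemma sum_lessThan_double: "(\<Sum>i<2 * (n :: nat). f i) = (\<Sum>j<n. f (2 * j) + f (2 * j + 1))"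
  by (induction n) (simp_all add: add_ac)

definition Wsum :: "nat \<Rightarrow> (nat \<Rightarrow> complex) \<Rightarrow> (nat \<Rightarrow> complex) \<Rightarrow> lpoly" where
  "Wsum n \<alpha> \<beta> = (\<Sum>j<n. lconst (\<alpha> j) * W ^ (2 * j) + lconst (\<beta> j) * W ^ (2 * j + 1))"

lemma Wsum_eq_powers:
  "Wsum n \<alpha> \<beta> = (\<Sum>i<2 * n. lconst (if even i then \<alpha> (i div 2) else \<beta> (i div 2)) * W ^ i)"
  unfolding Wsum_def sum_lessThan_double by simp

lemma Wsum_span: "\<exists>\<alpha> \<beta>. lcong (2 * n) p (Wsum n \<alpha> \<beta>)"
proof -
  obtain c where "lcong (2 * n) p (\<Sum>i<2 * n. lconst (c i) * W ^ i)"
    using powers_span[of "1 + ltinv" "2 * n" p] by (auto simp: W_eq)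
  moreover have "(\<Sum>i<2 * n. lconst (c i) * W ^ i) = Wsum n (\<lambda>j. c (2 * j)) (\<lambda>j. c (2 * j + 1))"
    unfolding Wsum_eq_powers by (intro sum.cong) auto
  ultimately show ?thesis
    by auto
qed

lemma Wsum_independent:
  assumes "lcong (2 * n) (Wsum n \<alpha> \<beta>) 0" "j < n"
  shows "\<alpha> j = 0" "\<beta> j = 0"
  using powers_independent[of "1 + ltinv" "2 * n" "\<lambda>i. if even i then \<alpha> (i div 2) else \<beta> (i div 2)"]
    assms unfolding Wsum_eq_powers W_eq
  by (force dest: spec[of _ "2 * j"], force dest: spec[of _ "2 * j + 1"])

lemma linv_Wsum: "linv (Wsum n \<alpha> \<beta>) = Wsum n \<alpha> (\<lambda>j. - \<beta> j)"
  unfolding Wsum_def linv_sum by (simp add: lconst_uminus)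

lemma Wsum_odd_span:
  assumes "linv q = - q"
  shows "\<exists>\<beta>. lcong (2 * n) q (Wsum n (\<lambda>_. 0) \<beta>)"
proof -
  have half: "2 * lconst (1/2) = 1"
    by (subst mult.commute) (simp add: lconst_mult_numeral)
  obtain \<alpha> \<beta> where q: "lcong (2 * n) q (Wsum n \<alpha> \<beta>)"
    using Wsum_span by blast
  have "lcong (2 * n) (- q) (Wsum n \<alpha> (\<lambda>j. - \<beta> j))"
    using lcong_linv[OF q] assms by (simp add: linv_Wsum)
  then have "lcong (2 * n) (lconst (1/2) * (q - - q)) (lconst (1/2) * (Wsum n \<alpha> \<beta> - Wsum n \<alpha> (\<lambda>j. - \<beta> j)))"
    by (intro lcong_mult lcong_diff q lcong_refl)
  moreover have "lconst (1/2) * (q - - q) = q"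
    by (simp add: algebra_simps half flip: mult_2)
  moreover have "lconst (1/2) * (Wsum n \<alpha> \<beta> - Wsum n \<alpha> (\<lambda>j. - \<beta> j)) = Wsum n (\<lambda>_. 0) \<beta>"
    unfolding Wsum_def sum_subtractf[symmetric] sum_distrib_left
    by (intro sum.cong) (simp_all add: lconst_hom algebra_simps half flip: mult_2)
  ultimately show ?thesis
    by metis
qed

section \<open>Congruence in the Onsager algebra\<close>

lemma lsmul_Pair [simp]: "lsmul z (a, b, c) = (lconst z * a, lconst z * b, lconst z * c)"
  unfolding lsmul_def by simp

lemma lbr_Pair [simp]:
  "lbr (a, b, c) (a', b', c') = (2 * (c * a' - a * c'), 2 * (b * c' - c * b'), a * b' - b * a')"
  unfolding lbr_def by simp

lemma lsmul_eq: "lsmul z x = (lconst z * fst x, lconst z * fst (snd x), lconst z * snd (snd x))"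
  by (cases x) simp

lemma lsmul_lsmul: "lsmul a (lsmul b x) = lsmul (a * b) x"
  by (cases x) (simp add: lconst_mult mult.assoc)

lemma lsmul_1: "lsmul 1 x = x"
  by (cases x) simp

lemma OA_Pair_iff: "(p, p', q) \<in> OA \<longleftrightarrow> p' = linv p \<and> linv q = - q"
  unfolding OA_def by simp

lemma OA_zero [simp]: "0 \<in> OA"
  by (simp add: zero_prod_def OA_Pair_iff)

lemma OA_add: "x \<in> OA \<Longrightarrow> y \<in> OA \<Longrightarrow> x + y \<in> OA"
  by (cases x; cases y) (auto simp: OA_Pair_iff)

lemma OA_diff: "x \<in> OA \<Longrightarrow> y \<in> OA \<Longrightarrow> x - y \<in> OA"
  by (cases x; cases y) (auto simp: OA_Pair_iff)

lemma OA_lsmul: "x \<in> OA \<Longrightarrow> lsmul z x \<in> OA"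
  by (cases x) (auto simp: OA_Pair_iff)

lemma OA_lbr: "x \<in> OA \<Longrightarrow> y \<in> OA \<Longrightarrow> lbr x y \<in> OA"
  by (cases x; cases y) (auto simp: OA_Pair_iff algebra_simps)

lemma OA_sum: "(\<And>i. i \<in> A \<Longrightarrow> f i \<in> OA) \<Longrightarrow> sum f A \<in> OA"
  by (induction A rule: infinite_finite_induct) (auto intro: OA_add)

lemmas OA_closed = OA_add OA_diff OA_lsmul OA_lbr OA_sum

definition loop_cong :: "nat \<Rightarrow> loop \<Rightarrow> loop \<Rightarrow> bool" where
  "loop_cong N x y \<longleftrightarrow> lcong N (fst x) (fst y) \<and> lcong N (fst (snd x)) (fst (snd y))
     \<and> lcong N (snd (snd x)) (snd (snd y))"

lemma loop_cong_Pair [simp]: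
  "loop_cong N (a, b, c) (a', b', c') \<longleftrightarrow> lcong N a a' \<and> lcong N b b' \<and> lcong N c c'"
  unfolding loop_cong_def by simp

lemma loop_cong_refl [simp]: "loop_cong N x x"
  unfolding loop_cong_def by simp

lemma loop_cong_sym: "loop_cong N x y \<Longrightarrow> loop_cong N y x"
  unfolding loop_cong_def by (auto intro: lcong_sym)

lemma loop_cong_trans [trans]: "loop_cong N x y \<Longrightarrow> loop_cong N y z \<Longrightarrow> loop_cong N x z"
  unfolding loop_cong_def by (auto intro: lcong_trans)

lemma loop_cong_add: "loop_cong N x x' \<Longrightarrow> loop_cong N y y' \<Longrightarrow> loop_cong N (x + y) (x' + y')"
  unfolding loop_cong_def by (auto intro: lcong_add)

lemma loop_cong_sum: "(\<And>i. i \<in> A \<Longrightarrow> loop_cong N (f i) (g i)) \<Longrightarrow> loop_cong N (sum f A) (sum g A)"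
  by (induction A rule: infinite_finite_induct) (auto intro: loop_cong_add)

lemma loop_cong_lsmul: "loop_cong N x x' \<Longrightarrow> loop_cong N (lsmul z x) (lsmul z x')"
  by (cases x; cases x') (auto intro: lcong_mult)

lemma loop_cong_lbr: "loop_cong N x x' \<Longrightarrow> loop_cong N y y' \<Longrightarrow> loop_cong N (lbr x y) (lbr x' y')"
  by (cases x; cases x'; cases y; cases y') (auto intro!: lcong_mult lcong_diff)

lemma loop_cong_OA_iff:
  assumes "x \<in> OA" "y \<in> OA"
  shows "loop_cong N x y \<longleftrightarrow> lcong N (fst x) (fst y) \<and> lcong N (snd (snd x)) (snd (snd y))"
  using assms by (cases x; cases y) (auto simp: OA_Pair_iff intro: lcong_linv)

lemma qeq_iff_loop_cong:
  assumes "x \<in> OA" "y \<in> OA"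
  shows "qeq l x y \<longleftrightarrow> loop_cong (2 * l) x y"
  using OA_diff[OF assms] unfolding qeq_def loop_cong_OA_iff[OF assms] lcong_def
  by (cases x; cases y) (auto simp: Iid_def)

lemma qeq_if_loop_cong_common:
  assumes "x \<in> OA" "y \<in> OA" "loop_cong (2 * l) x z" "loop_cong (2 * l) y z"
  shows "qeq l x y"
  using assms loop_cong_trans[OF assms(3) loop_cong_sym[OF assms(4)]] by (simp add: qeq_iff_loop_cong)

section \<open>The generators modulo the ideal\<close>

definition Epoly :: "nat \<Rightarrow> lpoly" where
  "Epoly j = lconst ((1/4) ^ (j + 1)) * W ^ (2 * j + 1)"

definition Hpoly :: "nat \<Rightarrow> lpoly" where
  "Hpoly m = lconst ((1/4) ^ m) * W ^ (2 * m)"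

definition Eloop :: "nat \<Rightarrow> loop" where
  "Eloop j = (Epoly j, - Epoly j, - Epoly j)"

definition Floop :: "nat \<Rightarrow> loop" where
  "Floop j = (- Epoly j, Epoly j, - Epoly j)"

definition Hloop :: "nat \<Rightarrow> loop" where
  "Hloop m = (Hpoly m, Hpoly m, 0)"

lemma Epoly_mult_Epoly: "4 * (Epoly j * Epoly k) = Hpoly (j + k + 1)"
proof -
  have "4 * (Epoly j * Epoly k) = lconst (4 * ((1/4) ^ (j + 1) * (1/4) ^ (k + 1))) * (W ^ (2 * j + 1) * W ^ (2 * k + 1))"
    unfolding Epoly_def lconst_mult lconst_numeral by (simp only: mult_ac)
  also have "\<dots> = lconst ((1/4) ^ (j + k + 1)) * W ^ (2 * (j + k + 1))"
    by (simp add: power_add flip: power_add)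
  finally show ?thesis
    unfolding Hpoly_def .
qed

lemma Hpoly_mult_Epoly: "Hpoly j * Epoly k = Epoly (j + k)"
proof -
  have "Hpoly j * Epoly k = lconst ((1/4) ^ j * (1/4) ^ (k + 1)) * (W ^ (2 * j) * W ^ (2 * k + 1))"
    unfolding Epoly_def Hpoly_def lconst_mult by (simp only: mult_ac)
  also have "\<dots> = lconst ((1/4) ^ (j + k + 1)) * W ^ (2 * (j + k) + 1)"
    by (simp add: power_add flip: power_add)
  finally show ?thesis
    unfolding Epoly_def .
qed

lemma lbr_Eloop_Floop: "lbr (Eloop j) (Floop k) = Hloop (j + k + 1)"
  unfolding Eloop_def Floop_def Hloop_def Epoly_mult_Epoly[symmetric] by (simp add: algebra_simps)

lemma lbr_Hloop_Eloop: "lbr (Hloop j) (Eloop k) = lsmul 2 (Eloop (j + k))"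
  unfolding Eloop_def Hloop_def by (simp flip: Hpoly_mult_Epoly)

lemma lbr_Hloop_Floop: "lbr (Hloop j) (Floop k) = lsmul (-2) (Floop (j + k))"
  unfolding Floop_def Hloop_def by (simp add: lconst_uminus flip: Hpoly_mult_Epoly)

lemma lbr_Eloop_Eloop: "lbr (Eloop j) (Eloop k) = 0"
  unfolding Eloop_def by (simp add: zero_prod_def algebra_simps)

lemma lbr_Floop_Floop: "lbr (Floop j) (Floop k) = 0"
  unfolding Floop_def by (simp add: zero_prod_def algebra_simps)

lemma linv_Epoly [simp]: "linv (Epoly j) = - Epoly j" and linv_Hpoly [simp]: "linv (Hpoly m) = Hpoly m"
  unfolding Epoly_def Hpoly_def by simp_all

lemma Eloop_OA: "Eloop j \<in> OA" and Floop_OA: "Floop j \<in> OA" and Hloop_OA: "Hloop m \<in> OA"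
  unfolding Eloop_def Floop_def Hloop_def OA_Pair_iff by simp_all

lemma lt_minus_one_power_dvd_W_power: "N \<le> n \<Longrightarrow> (lt - 1) ^ N dvd W ^ n"
  unfolding W_eq power_mult_distrib by (intro dvd_mult2 le_imp_power_dvd)

lemma Epoly_vanishes: "l \<le> j \<Longrightarrow> lcong (2 * l) (Epoly j) 0"
  unfolding Epoly_def by (intro lcong_0_if_dvd dvd_mult lt_minus_one_power_dvd_W_power) simp

lemma Hpoly_vanishes: "l \<le> m \<Longrightarrow> lcong (2 * l) (Hpoly m) 0"
  unfolding Hpoly_def by (intro lcong_0_if_dvd dvd_mult lt_minus_one_power_dvd_W_power) simp

lemma Eloop_vanishes: "l \<le> j \<Longrightarrow> loop_cong (2 * l) (Eloop j) 0"
  and Floop_vanishes: "l \<le> j \<Longrightarrow> loop_cong (2 * l) (Floop j) 0"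
  and Hloop_vanishes: "l \<le> m \<Longrightarrow> loop_cong (2 * l) (Hloop m) 0"
  unfolding Eloop_def Floop_def Hloop_def zero_prod_def
  using Epoly_vanishes[of l j] Hpoly_vanishes[of l m] by (auto intro: lcong_uminus[of _ _ 0, simplified])

lemma Xe_OA: "Xe k \<in> OA" and Ye_OA: "Ye k \<in> OA"
  unfolding Xe_def Ye_def OA_Pair_iff by (simp_all add: algebra_simps)

lemma Xsum_OA: "Xsum l \<in> OA"
  unfolding Xsum_def by (intro OA_closed Xe_OA)

lemma E0_OA: "E0 l \<in> OA" and F0_OA: "F0 l \<in> OA"
  unfolding E0_def F0_def by (intro OA_closed Ye_OA Xsum_OA)+

lemma H1_OA: "H1 l \<in> OA"
  unfolding H1_def by (intro OA_lbr E0_OA F0_OA)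

lemma Eg_OA: "Eg l j \<in> OA" and Fg_OA: "Fg l j \<in> OA"
  by (induction j) (simp_all add: E0_OA F0_OA H1_OA OA_lsmul OA_lbr)

lemma Hg_OA: "Hg l m \<in> OA"
  unfolding Hg_def H0_def by (simp add: Let_def Xe_OA Eg_OA Fg_OA OA_lsmul OA_lbr)

lemma Et_OA: "Et l j \<in> OA" and Ft_OA: "Ft l j \<in> OA" and Ht_OA: "Ht l m \<in> OA"
  unfolding Et_def Ft_def Ht_def by (simp_all add: Eg_OA Fg_OA Hg_OA)

lemma Ye_1: "Ye 1 = (0, 0, - W)"
  unfolding Ye_def W_def by simp

lemma snd_snd_Xsum: "snd (snd (Xsum l)) = 0"
  unfolding Xsum_def Xe_def by (simp add: snd_sum lsmul_eq)

text \<open>The alternating sum in \<open>Xsum\<close> is a truncated geometric series in \<open>1 - t\<close>.\<close>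

lemma fst_Xsum:
  assumes "1 \<le> l"
  shows "fst (Xsum l) = 2 * W + 2 * ltinv * (lt - 1) ^ (2 * l)"
proof -
  define T where "T = (\<Sum>k\<in>{1..2 * l - 1}. (1 - lt) ^ k)"
  have "(1 - lt) ^ k = (-1) ^ k * (lt - 1) ^ k" for k
    by (simp flip: power_mult_distrib)
  then have fst_eq: "fst (Xsum l) = 2 * (lt - 1) - 2 * T"
    unfolding Xsum_def Xe_def T_def by (simp add: fst_sum lsmul_eq lconst_hom sum_distrib_left mult_ac)
  have "1 + T = (\<Sum>k<Suc (2 * l - 1). (1 - lt) ^ k)"
    unfolding T_def sum.lessThan_Suc_shift by (simp add: sum.atLeast1_atMost_eq)
  also have "\<dots> = (\<Sum>k<2 * l. (1 - lt) ^ k)"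
    using assms by simp
  finally have "lt * (1 + T) = 1 - (1 - lt) ^ (2 * l)"
    using one_diff_power_eq[of "1 - lt" "2 * l"] by simp
  also have "(1 - lt) ^ (2 * l) = (lt - 1) ^ (2 * l)"
    by (simp add: power_mult power2_commute)
  finally have "ltinv * (lt * (1 + T)) = ltinv * (1 - (lt - 1) ^ (2 * l))"
    by simp
  then have T_eq: "T = ltinv - ltinv * (lt - 1) ^ (2 * l) - 1"
    by (simp add: algebra_simps flip: mult.assoc)
  show ?thesis
    unfolding fst_eq T_eq W_def by (simp add: algebra_simps)
qed

context
  fixes l :: nat
  assumes l_pos: "1 \<le> l"
begin

lemma E0_cong: "loop_cong (2 * l) (E0 l) (Eloop 0)"
  and F0_cong: "loop_cong (2 * l) (F0 l) (Floop 0)"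
proof -
  have "fst (E0 l) = lconst (1/8) * 2 * (W + ltinv * (lt - 1) ^ (2 * l))"
    and "fst (F0 l) = - (lconst (1/8) * 2 * (W + ltinv * (lt - 1) ^ (2 * l)))"
    unfolding E0_def F0_def Ye_1 by (simp_all add: lsmul_eq fst_Xsum[OF l_pos] algebra_simps)
  then have "fst (E0 l) = Epoly 0 + (lt - 1) ^ (2 * l) * (lconst (1/4) * ltinv)"
    and "fst (F0 l) = - Epoly 0 - (lt - 1) ^ (2 * l) * (lconst (1/4) * ltinv)"
    unfolding Epoly_def lconst_mult_numeral by (simp_all add: algebra_simps)
  moreover have "snd (snd (E0 l)) = - Epoly 0" and "snd (snd (F0 l)) = - Epoly 0"
    unfolding E0_def F0_def Epoly_def Ye_1 by (simp_all add: lsmul_eq snd_snd_Xsum)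
  ultimately show "loop_cong (2 * l) (E0 l) (Eloop 0)" "loop_cong (2 * l) (F0 l) (Floop 0)"
    unfolding loop_cong_OA_iff[OF E0_OA Eloop_OA] loop_cong_OA_iff[OF F0_OA Floop_OA]
    by (simp_all add: Eloop_def Floop_def lcong_def)
qed

lemma H1_cong: "loop_cong (2 * l) (H1 l) (Hloop 1)"
  using loop_cong_lbr[OF E0_cong F0_cong] unfolding H1_def lbr_Eloop_Floop by simp

lemma Eg_cong: "loop_cong (2 * l) (Eg l j) (Eloop j)"
proof (induction j)
  case (Suc j)
  have "loop_cong (2 * l) (Eg l (Suc j)) (lsmul (1/2) (lbr (Hloop 1) (Eloop j)))"
    unfolding Eg.simps by (intro loop_cong_lsmul loop_cong_lbr H1_cong Suc.IH)
  then show ?case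
    by (simp add: lbr_Hloop_Eloop lsmul_lsmul lsmul_1)
qed (simp add: E0_cong)

lemma Fg_cong: "loop_cong (2 * l) (Fg l j) (Floop j)"
proof (induction j)
  case (Suc j)
  have "loop_cong (2 * l) (Fg l (Suc j)) (lsmul (-1/2) (lbr (Hloop 1) (Floop j)))"
    unfolding Fg.simps by (intro loop_cong_lsmul loop_cong_lbr H1_cong Suc.IH)
  then show ?case
    by (simp add: lbr_Hloop_Floop lsmul_lsmul lsmul_1)
qed (simp add: F0_cong)

lemma lbr_Eg_Fg_cong: "loop_cong (2 * l) (lbr (Eg l j) (Fg l k)) (Hloop (j + k + 1))"
  using loop_cong_lbr[OF Eg_cong Fg_cong] unfolding lbr_Eloop_Floop .

lemma Hg_cong: "loop_cong (2 * l) (Hg l m) (Hloop m)"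
proof (cases "m = 0")
  case True
  then show ?thesis
    by (simp add: Hg_def H0_def Xe_def Hloop_def Hpoly_def lconst_mult_numeral)
next
  case False
  then show ?thesis
    using lbr_Eg_Fg_cong[of "min (m - 1) (l - 1)" "m - 1 - min (m - 1) (l - 1)"]
    by (simp add: Hg_def Let_def)
qed

lemma Et_cong: "loop_cong (2 * l) (Et l j) (Eloop j)"
  and Ft_cong: "loop_cong (2 * l) (Ft l j) (Floop j)"
  and Ht_cong: "loop_cong (2 * l) (Ht l m) (Hloop m)"
  unfolding Et_def Ft_def Ht_def
  using Eg_cong Fg_cong Hg_cong Eloop_vanishes[of l j] Floop_vanishes[of l j] Hloop_vanishes[of l m]
  by (auto intro: loop_cong_sym)

end

section \<open>The bracket relations\<close>

lemma Hg_1: "Hg l 1 = H1 l"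
  unfolding Hg_def H1_def by simp

context
  fixes l :: nat
  assumes l_pos: "1 \<le> l"
begin

lemma lbr_Eg_Fg_shift:
  assumes "1 \<le> k"
  shows "qeq l (lbr (Eg l (Suc j)) (Fg l (k - 1))) (lbr (Eg l j) (Fg l k))"
  using lbr_Eg_Fg_cong[OF l_pos, of "Suc j" "k - 1"] lbr_Eg_Fg_cong[OF l_pos, of j k] assms
  by (intro qeq_if_loop_cong_common[where z = "Hloop (j + k + 1)"] OA_lbr Eg_OA Fg_OA) simp_all

lemma lbr_Eg_Fg_qeq_Hg: "qeq l (lbr (Eg l j) (Fg l k)) (Hg l (j + k + 1))"
  by (intro qeq_if_loop_cong_common[OF _ _ lbr_Eg_Fg_cong[OF l_pos] Hg_cong[OF l_pos]] OA_lbr Eg_OA Fg_OA Hg_OA)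

lemma Hg_vanishes: "l \<le> m \<Longrightarrow> qeq l (Hg l m) 0"
  using loop_cong_sym[OF Hloop_vanishes]
  by (intro qeq_if_loop_cong_common[OF _ _ Hg_cong[OF l_pos]] Hg_OA OA_zero)

lemma lbr_Et_Ft: "qeq l (lbr (Et l j) (Ft l k)) (Ht l (j + k + 1))"
  using loop_cong_lbr[OF Et_cong[OF l_pos] Ft_cong[OF l_pos], of j k]
  by (intro qeq_if_loop_cong_common[OF _ _ _ Ht_cong[OF l_pos]] OA_lbr Et_OA Ft_OA Ht_OA)
    (simp add: lbr_Eloop_Floop)

lemma lbr_Ht_Et: "qeq l (lbr (Ht l j) (Et l k)) (lsmul 2 (Et l (j + k)))"
  using loop_cong_lbr[OF Ht_cong[OF l_pos] Et_cong[OF l_pos], of j k]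
  by (intro qeq_if_loop_cong_common[OF _ _ _ loop_cong_lsmul[OF Et_cong[OF l_pos]]] OA_lbr OA_lsmul Et_OA Ht_OA)
    (simp add: lbr_Hloop_Eloop)

lemma lbr_Ht_Ft: "qeq l (lbr (Ht l j) (Ft l k)) (lsmul (-2) (Ft l (j + k)))"
  using loop_cong_lbr[OF Ht_cong[OF l_pos] Ft_cong[OF l_pos], of j k]
  by (intro qeq_if_loop_cong_common[OF _ _ _ loop_cong_lsmul[OF Ft_cong[OF l_pos]]] OA_lbr OA_lsmul Ft_OA Ht_OA)
    (simp add: lbr_Hloop_Floop)

lemma lbr_Et_Et: "qeq l (lbr (Et l j) (Et l k)) 0"
  using loop_cong_lbr[OF Et_cong[OF l_pos] Et_cong[OF l_pos], of j k]
  by (intro qeq_if_loop_cong_common[OF _ _ _ loop_cong_refl] OA_lbr Et_OA OA_zero)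
    (simp add: lbr_Eloop_Eloop)

lemma lbr_Ft_Ft: "qeq l (lbr (Ft l j) (Ft l k)) 0"
  using loop_cong_lbr[OF Ft_cong[OF l_pos] Ft_cong[OF l_pos], of j k]
  by (intro qeq_if_loop_cong_common[OF _ _ _ loop_cong_refl] OA_lbr Ft_OA OA_zero)
    (simp add: lbr_Floop_Floop)

end

section \<open>Linear independence and spanning\<close>

definition lin_comb :: "nat \<Rightarrow> (nat \<Rightarrow> complex) \<Rightarrow> (nat \<Rightarrow> complex) \<Rightarrow> (nat \<Rightarrow> complex) \<Rightarrow> loop" where
  "lin_comb l a b c = (\<Sum>j<l. lsmul (a j) (Eg l j) + lsmul (b j) (Fg l j) + lsmul (c j) (Hg l j))"

lemma lin_comb_OA: "lin_comb l a b c \<in> OA"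
  unfolding lin_comb_def by (intro OA_closed Eg_OA Fg_OA Hg_OA)

context
  fixes l :: nat
  assumes l_pos: "1 \<le> l"
begin

lemma lin_comb_components:
  "lcong (2 * l) (fst (lin_comb l a b c)) (Wsum l (\<lambda>j. c j * (1/4) ^ j) (\<lambda>j. (a j - b j) * (1/4) ^ (j + 1)))"
  "lcong (2 * l) (snd (snd (lin_comb l a b c))) (Wsum l (\<lambda>_. 0) (\<lambda>j. - (a j + b j) * (1/4) ^ (j + 1)))"
proof -
  let ?model = "\<Sum>j<l. lsmul (a j) (Eloop j) + lsmul (b j) (Floop j) + lsmul (c j) (Hloop j)"
  have "loop_cong (2 * l) (lin_comb l a b c) ?model"
    unfolding lin_comb_def
    by (intro loop_cong_sum loop_cong_add loop_cong_lsmul Eg_cong[OF l_pos] Fg_cong[OF l_pos] Hg_cong[OF l_pos])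
  moreover have "fst ?model = Wsum l (\<lambda>j. c j * (1/4) ^ j) (\<lambda>j. (a j - b j) * (1/4) ^ (j + 1))"
    unfolding fst_sum Wsum_def Eloop_def Floop_def Hloop_def Epoly_def Hpoly_def lconst_hom
    by (intro sum.cong refl) (simp add: left_diff_distrib mult.assoc)
  moreover have "snd (snd ?model) = Wsum l (\<lambda>_. 0) (\<lambda>j. - (a j + b j) * (1/4) ^ (j + 1))"
    unfolding snd_sum Wsum_def Eloop_def Floop_def Hloop_def Epoly_def lconst_hom
    by (intro sum.cong) (simp_all add: algebra_simps)
  ultimately show
    "lcong (2 * l) (fst (lin_comb l a b c)) (Wsum l (\<lambda>j. c j * (1/4) ^ j) (\<lambda>j. (a j - b j) * (1/4) ^ (j + 1)))"
    "lcong (2 * l) (snd (snd (lin_comb l a b c))) (Wsum l (\<lambda>_. 0) (\<lambda>j. - (a j + b j) * (1/4) ^ (j + 1)))"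
    unfolding loop_cong_def by metis+
qed

lemma lin_comb_independent:
  assumes "lin_comb l a b c \<in> Iid (2 * l)" "j < l"
  shows "a j = 0 \<and> b j = 0 \<and> c j = 0"
proof -
  have "qeq l (lin_comb l a b c) 0"
    using assms(1) by (simp add: qeq_def)
  then have fst_0: "lcong (2 * l) (fst (lin_comb l a b c)) 0"
    and snd_snd_0: "lcong (2 * l) (snd (snd (lin_comb l a b c))) 0"
    unfolding qeq_iff_loop_cong[OF lin_comb_OA OA_zero] loop_cong_def by auto
  have fst_W: "lcong (2 * l) (Wsum l (\<lambda>j. c j * (1/4) ^ j) (\<lambda>j. (a j - b j) * (1/4) ^ (j + 1))) 0"
    using lcong_sym[OF lin_comb_components(1)] fst_0 by (rule lcong_trans)
  have "c j * (1/4) ^ j = 0" "(a j - b j) * (1/4) ^ (j + 1) = 0"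
    using Wsum_independent[OF fst_W assms(2)] by simp_all
  have snd_snd_W: "lcong (2 * l) (Wsum l (\<lambda>_. 0) (\<lambda>j. - (a j + b j) * (1/4) ^ (j + 1))) 0"
    using lcong_sym[OF lin_comb_components(2)] snd_snd_0 by (rule lcong_trans)
  have "- (a j + b j) * (1/4) ^ (j + 1) = 0"
    using Wsum_independent(2)[OF snd_snd_W assms(2)] by simp
  with \<open>c j * (1/4) ^ j = 0\<close> \<open>(a j - b j) * (1/4) ^ (j + 1) = 0\<close> show ?thesis
    by simp
qed

lemma lin_comb_spans:
  assumes "x \<in> OA"
  shows "\<exists>a b c. qeq l x (lin_comb l a b c)"
proof -
  obtain p q where x: "x = (p, linv p, q)" and q: "linv q = - q"
    using assms unfolding OA_def by auto
  obtain \<alpha> \<beta> where p_cong: "lcong (2 * l) p (Wsum l \<alpha> \<beta>)"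
    using Wsum_span by blast
  obtain \<gamma> where q_cong: "lcong (2 * l) q (Wsum l (\<lambda>_. 0) \<gamma>)"
    using Wsum_odd_span[OF q] by blast
  define a where "a j = 4 ^ (j + 1) * (\<beta> j - \<gamma> j) / 2" for j
  define b where "b j = - (4 ^ (j + 1) * (\<beta> j + \<gamma> j) / 2)" for j
  define c where "c j = 4 ^ j * \<alpha> j" for j
  have coeffs: "(\<lambda>j. c j * (1/4) ^ j) = \<alpha>" "(\<lambda>j. (a j - b j) * (1/4) ^ (j + 1)) = \<beta>"
    "(\<lambda>j. - (a j + b j) * (1/4) ^ (j + 1)) = \<gamma>"
    unfolding a_def b_def c_def by (simp_all add: fun_eq_iff power_one_over field_simps)
  have "lcong (2 * l) p (fst (lin_comb l a b c))"
    using p_cong lcong_sym[OF lin_comb_components(1)[of a b c, unfolded coeffs]] by (rule lcong_trans)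
  moreover have "lcong (2 * l) q (snd (snd (lin_comb l a b c)))"
    using q_cong lcong_sym[OF lin_comb_components(2)[of a b, unfolded coeffs]] by (rule lcong_trans)
  ultimately have "qeq l x (lin_comb l a b c)"
    unfolding qeq_iff_loop_cong[OF assms lin_comb_OA] loop_cong_OA_iff[OF assms lin_comb_OA]
    by (simp add: x)
  then show ?thesis
    by blast
qed

end

theorem theorem4:
  fixes l :: nat
  assumes "l \<ge> 1"
  shows
    \<comment> \<open>all the elements lie in OA\<close>
    "(\<forall>j. Eg l j \<in> OA \<and> Fg l j \<in> OA \<and> Hg l j \<in> OA)
     \<comment> \<open>(i)\<close>
   \<and> (\<forall>j k. j \<le> l - 2 \<and> 1 \<le> k \<and> k \<le> l - 1 \<longrightarrow>
        qeq l (lbr (Eg l (Suc j)) (Fg l (k - 1))) (lbr (Eg l j) (Fg l k)))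
   \<and> (\<forall>m j k. 1 \<le> m \<and> m \<le> 2 * l - 1 \<and> j \<le> l - 1 \<and> k \<le> l - 1 \<and> j + k + 1 = m \<longrightarrow>
        qeq l (lbr (Eg l j) (Fg l k)) (Hg l m))
   \<and> qeq l (Hg l 1) (H1 l)
     \<comment> \<open>(ii): linear independence and spanning modulo the ideal\<close>
   \<and> (\<forall>a b c :: nat \<Rightarrow> complex.
        (\<Sum>j<l. lsmul (a j) (Eg l j) + lsmul (b j) (Fg l j) + lsmul (c j) (Hg l j)) \<in> Iid (2 * l)
        \<longrightarrow> (\<forall>j<l. a j = 0 \<and> b j = 0 \<and> c j = 0))
   \<and> (\<forall>x \<in> OA. \<exists>a b c :: nat \<Rightarrow> complex.
        qeq l x (\<Sum>j<l. lsmul (a j) (Eg l j) + lsmul (b j) (Fg l j) + lsmul (c j) (Hg l j)))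
   \<and> (\<forall>m. l \<le> m \<and> m \<le> 2 * l - 1 \<longrightarrow> qeq l (Hg l m) 0)
     \<comment> \<open>(iii)\<close>
   \<and> (\<forall>j k. j \<le> l - 1 \<and> k \<le> l - 1 \<longrightarrow>
        qeq l (lbr (Et l j) (Ft l k)) (Ht l (j + k + 1))
      \<and> qeq l (lbr (Ht l j) (Et l k)) (lsmul 2 (Et l (j + k)))
      \<and> qeq l (lbr (Ht l j) (Ft l k)) (lsmul (-2) (Ft l (j + k)))
      \<and> qeq l (lbr (Et l j) (Et l k)) 0
      \<and> qeq l (lbr (Ft l j) (Ft l k)) 0)"
proof -
  have "qeq l (Hg l 1) (H1 l)"
    unfolding Hg_1 qeq_iff_loop_cong[OF H1_OA H1_OA] by simp
  then show ?thesis
    using Eg_OA Fg_OA Hg_OA lbr_Eg_Fg_shift[OF assms] lbr_Eg_Fg_qeq_Hg[OF assms]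
      lin_comb_independent[OF assms] lin_comb_spans[OF assms] Hg_vanishes[OF assms]
      lbr_Et_Ft[OF assms] lbr_Ht_Et[OF assms] lbr_Ht_Ft[OF assms] lbr_Et_Et[OF assms] lbr_Ft_Ft[OF assms]
    unfolding lin_comb_def by (intro conjI allI impI ballI) blast+
qed

end
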